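(* Let $d,p\ge1$, $X=(X_1,\dots,X_d)\in\mathbb{R}^d$, $\Sigma$ a symmetric positive definite $d\times d$ matrix with $S=\Sigma^{-1}=(s_{lm})$, and let $h(\mathbf{x})=\sum_{\mathbf{k}\in\Omega}a_{\mathbf{k}}H_{\mathbf{k}}(\mathbf{x})$ with real coefficients $a_{\mathbf{k}}$, where $\Omega=\{\mathbf{k}\in\mathbb{N}^d:|\mathbf{k}|_1\le p\}$. Suppose the real family $(\tilde\varphi_{\mathbf{k}})$ satisfies the recursion system (R) for $(S,X,(a_\mathbf{k}),p)$, and let $C$ be the associated constant defined below. Then $\varphi(\mathbf{x}):=\sum_{\mathbf{k}\in\Omega}\tilde\varphi_{\mathbf{k}}H_{\mathbf{k}}(\mathbf{x})$ satisfies, for all $\mathbf{x}\in\mathbb{R}^d$, $$-(\mathbf{x}-X)^T\Sigma^{-1}\nabla\varphi(\mathbf{x})+\Delta\varphi(\mathbf{x})=-h(\mathbf{x})+C,$$ equivalently $\nabla^T\big(\mathcal{N}(\mathbf{x};X,\Sigma)\nabla\varphi(\mathbf{x})\big)=(-h(\mathbf{x})+C)\,\mathcal{N}(\mathbf{x};X,\Sigma)$.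
   Context: Multi-index notation: $\mathbf{k}=(k_1,\dots,k_d)\in\mathbb{N}^d$, $|\mathbf{k}|_1=\sum_l k_l$, $\mathbf{e}_l$ is the $l$-th standard unit vector. $H_k$ denotes the (physicists') Hermite polynomial of degree $k$ ($H_0=1$, $H_1(x)=2x$, $H_{k+1}(x)=2xH_k(x)-2kH_{k-1}(x)$), and $H_{\mathbf{k}}(\mathbf{x})=\prod_{l=1}^dH_{k_l}(x_l)$. $\mathcal{N}(\mathbf{x};\mu,\Sigma)$ is the Gaussian density with mean $\mu$ and covariance $\Sigma$. Recursion system (R) for $(S,X,(a_\mathbf{k}),p)$, with $S=(s_{lm})$ symmetric: the family $(\tilde\varphi_{\mathbf{k}})_{\mathbf{k}\in\mathbb{Z}^d}$ satisfies $\tilde\varphi_{\mathbf{k}}=0$ whenever $|\mathbf{k}|_1>p$ or some component of $\mathbf{k}$ is negative, and for every $\mathbf{q}\in\mathbb{N}^d$ with $1\le|\mathbf{q}|_1\le p$: $$\sum_{l=1}^d s_{ll}q_l\tilde\varphi_{\mathbf{q}}+\sum_{l\ne m}s_{lm}(q_m+1)\tilde\varphi_{\mathbf{q}+\mathbf{e}_m-\mathbf{e}_l}=a_{\mathbf{q}}+\sum_{l,m=1}^d 2s_{lm}(q_m+1)X_l\tilde\varphi_{\mathbf{q}+\mathbf{e}_m}-\sum_{l\neq m}2s_{lm}(q_m+1)(q_l+1)\tilde\varphi_{\mathbf{q}+\mathbf{e}_m+\mathbf{e}_l}+\sum_{l=1}^d2(2-s_{ll})(q_l+1)(q_l+2)\tilde\varphi_{\mathbf{q}+2\mathbf{e}_l}.$$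 The associated constant is $C:=a_{\mathbf{0}}+\sum_{l,m=1}^d2s_{lm}X_l\tilde\varphi_{\mathbf{e}_m}-\sum_{l\ne m}2s_{lm}\tilde\varphi_{\mathbf{e}_m+\mathbf{e}_l}+\sum_{l=1}^d4(2-s_{ll})\tilde\varphi_{2\mathbf{e}_l}$. ($\tilde\varphi_{\mathbf 0}$ is arbitrary.) *)

theory Defs
  imports "HOL-Analysis.Analysis"
begin

fun hermite :: "nat \<Rightarrow> real \<Rightarrow> real" where
  "hermite 0 x = 1"
| "hermite (Suc 0) x = 2 * x"
| "hermite (Suc (Suc k)) x = 2 * x * hermite (Suc k) x - 2 * real (Suc k) * hermite k x"

definition hermite_multi :: "('n::finite \<Rightarrow> nat) \<Rightarrow> real^'n \<Rightarrow> real" where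
  "hermite_multi k x = (\<Prod>l\<in>UNIV. hermite (k l) (x $ l))"

definition multi_index_set :: "nat \<Rightarrow> ('n::finite \<Rightarrow> nat) set" where
  "multi_index_set p = {k. (\<Sum>l\<in>UNIV. k l) \<le> p}"

definition herm_expansion :: "(('n::finite \<Rightarrow> nat) \<Rightarrow> real) \<Rightarrow> nat \<Rightarrow> real^'n \<Rightarrow> real" where
  "herm_expansion c p x = (\<Sum>k\<in>multi_index_set p. c k * hermite_multi k x)"

definition unit_mi :: "'n \<Rightarrow> 'n \<Rightarrow> int" where
  "unit_mi l = (\<lambda>j. if j = l then 1 else 0)"

definition recursion_system ::
  "real^'n^'n \<Rightarrow> real^'n \<Rightarrow> (('n::finite \<Rightarrow> nat) \<Rightarrow> real) \<Rightarrow> nat \<Rightarrow> (('n \<Rightarrow> int) \<Rightarrow> real) \<Rightarrow> bool" where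
  "recursion_system S X a p phi \<longleftrightarrow>
     (\<forall>k::'n \<Rightarrow> int. ((\<Sum>l\<in>UNIV. k l) > int p \<or> (\<exists>l. k l < 0)) \<longrightarrow> phi k = 0) \<and>
     (\<forall>q::'n \<Rightarrow> nat. 1 \<le> (\<Sum>l\<in>UNIV. q l) \<and> (\<Sum>l\<in>UNIV. q l) \<le> p \<longrightarrow>
        (\<Sum>l\<in>UNIV. S$l$l * real (q l) * phi (\<lambda>j. int (q j)))
        + (\<Sum>l\<in>UNIV. \<Sum>m\<in>UNIV - {l}. S$l$m * real (q m + 1)
              * phi (\<lambda>j. int (q j) + unit_mi m j - unit_mi l j))
        = a q
        + (\<Sum>l\<in>UNIV. \<Sum>m\<in>UNIV. 2 * S$l$m * real (q m + 1) * X$l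
              * phi (\<lambda>j. int (q j) + unit_mi m j))
        - (\<Sum>l\<in>UNIV. \<Sum>m\<in>UNIV - {l}. 2 * S$l$m * real (q m + 1) * real (q l + 1)
              * phi (\<lambda>j. int (q j) + unit_mi m j + unit_mi l j))
        + (\<Sum>l\<in>UNIV. 2 * (2 - S$l$l) * real (q l + 1) * real (q l + 2)
              * phi (\<lambda>j. int (q j) + 2 * unit_mi l j)))"

definition recursion_const ::
  "real^'n^'n \<Rightarrow> real^'n \<Rightarrow> (('n::finite \<Rightarrow> nat) \<Rightarrow> real) \<Rightarrow> (('n \<Rightarrow> int) \<Rightarrow> real) \<Rightarrow> real" where
  "recursion_const S X a phi =
     a (\<lambda>_. 0)
     + (\<Sum>l\<in>UNIV. \<Sum>m\<in>UNIV. 2 * S$l$m * X$l * phi (unit_mi m))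
     - (\<Sum>l\<in>UNIV. \<Sum>m\<in>UNIV - {l}. 2 * S$l$m * phi (\<lambda>j. unit_mi m j + unit_mi l j))
     + (\<Sum>l\<in>UNIV. 4 * (2 - S$l$l) * phi (\<lambda>j. 2 * unit_mi l j))"

definition partial_deriv :: "'n::finite \<Rightarrow> (real^'n \<Rightarrow> real) \<Rightarrow> real^'n \<Rightarrow> real" where
  "partial_deriv i f x = deriv (\<lambda>t. f (x + t *\<^sub>R axis i 1)) 0"

definition laplacian :: "(real^'n::finite \<Rightarrow> real) \<Rightarrow> real^'n \<Rightarrow> real" where
  "laplacian f x = (\<Sum>i\<in>UNIV. partial_deriv i (partial_deriv i f) x)"

definition gaussian_density :: "real^'n::finite \<Rightarrow> real^'n^'n \<Rightarrow> real^'n \<Rightarrow> real" where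
  "gaussian_density X Sig x =
     exp (- (1/2) * ((x - X) \<bullet> (matrix_inv Sig *v (x - X))))
     / sqrt ((2 * pi) ^ CARD('n) * det Sig)"

end

(*
  Expand \<phi> = \<Sum>\<^sub>k \<phi>\<^sub>k H\<^sub>k with coefficients indexed by \<int>\<^sup>d and extended by zero. The one-variable
  identities H\<^sub>n' = 2n H\<^sub>n\<^sub>-\<^sub>1 and x H\<^sub>n = H\<^sub>n\<^sub>+\<^sub>1/2 + n H\<^sub>n\<^sub>-\<^sub>1 turn \<partial>\<^sub>l and multiplication by x\<^sub>l into shift
  operators on coefficient families. Hence -(x - X)\<^sup>T S \<nabla>\<phi> + \<Delta>\<phi> is again a Hermite series, and its
  coefficient at q is exactly the right-hand side minus the left-hand side of (R) without a\<^sub>q.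
  By (R) this is -a\<^sub>q for 1 \<le> |q| \<le> p; it is C - a\<^sub>0 at q = 0, where the terms \<phi>(e\<^sub>m - e\<^sub>l) vanish
  because their index has a negative entry; and it is 0 for |q| > p, since every index occurring
  then has total degree > p. The divergence form follows from \<partial>\<^sub>l N = -(S (x - X))\<^sub>l N, which uses
  that S = \<Sigma>\<inverse> is symmetric.
*)

theory Submission
  imports Defs "HOL-Library.Function_Algebras" "HOL-Library.Groups_Big_Fun"
begin

section \<open>Hermite polynomials\<close>

lemma hermite_has_real_derivative:
  "(hermite n has_real_derivative 2 * real n * hermite (n - 1) x) (at x)"
proof (induction n x rule: hermite.induct)
  case (3 k x)
  have recurrence: "hermite (Suc (Suc k)) = (\<lambda>x. 2 * x * hermite (Suc k) x - 2 * real (Suc k) * hermite k x)"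
    by (rule ext) simp
  show ?case
    unfolding recurrence
    by (rule derivative_eq_intros "3.IH" refl)+ (cases k; simp add: algebra_simps)
qed (auto intro!: derivative_eq_intros)

lemma hermite_mult_x: "x * hermite n x = hermite (Suc n) x / 2 + real n * hermite (n - 1) x"
  by (cases n) (simp_all add: field_simps)

(* Extension by zero to negative indices, so that the shifts k \<plusminus> e\<^sub>l need no side conditions. *)
definition hermite_multi_int :: "('n::finite \<Rightarrow> int) \<Rightarrow> real^'n \<Rightarrow> real" where
  "hermite_multi_int k x = (if 0 \<le> k then hermite_multi (nat \<circ> k) x else 0)"

lemma unit_mi_apply [simp]: "unit_mi l j = (if j = l then 1 else 0)"
  by (simp add: unit_mi_def)

lemma hermite_multi_int_coord:
  assumes "0 \<le> k" and "\<And>l. l \<noteq> i \<Longrightarrow> k' l = k l" and "\<And>l. l \<noteq> i \<Longrightarrow> y $ l = x $ l"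
  shows "hermite_multi_int k' y =
    (if 0 \<le> k' i then hermite (nat (k' i)) (y $ i) * (\<Prod>l\<in>UNIV - {i}. hermite (nat (k l)) (x $ l))
     else 0)"
proof -
  have "0 \<le> k' \<longleftrightarrow> 0 \<le> k' i"
    using assms(1,2) by (auto simp: le_fun_def) (metis)
  moreover have "(\<Prod>l\<in>UNIV - {i}. hermite (nat (k' l)) (y $ l))
      = (\<Prod>l\<in>UNIV - {i}. hermite (nat (k l)) (x $ l))"
    by (rule prod.cong) (auto simp: assms(2,3))
  ultimately show ?thesis
    by (simp add: hermite_multi_int_def hermite_multi_def prod.remove[of UNIV i])
qed

lemma hermite_multi_int_line_deriv:
  "((\<lambda>t. hermite_multi_int k (x + t *\<^sub>R axis i 1)) has_real_derivative
      2 * of_int (k i) * hermite_multi_int (k - unit_mi i) x) (at 0)"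
proof (cases "0 \<le> k")
  case False
  then have "\<not> 0 \<le> k - unit_mi i"
    by (auto simp: le_fun_def) (metis diff_ge_0_iff_ge order.trans zero_le_one)
  with False show ?thesis
    by (simp add: hermite_multi_int_def)
next
  case True
  define P where "P = (\<Prod>l\<in>UNIV - {i}. hermite (nat (k l)) (x $ l))"
  have line: "hermite_multi_int k (x + t *\<^sub>R axis i 1) = hermite (nat (k i)) (x $ i + t) * P" for t
    using True hermite_multi_int_coord[OF True, of i k "x + t *\<^sub>R axis i 1" x]
    by (simp add: P_def axis_def le_fun_def)
  have lower: "of_int (k i) * hermite_multi_int (k - unit_mi i) x
      = real (nat (k i)) * hermite (nat (k i) - 1) (x $ i) * P"
    using True hermite_multi_int_coord[OF True, of i "k - unit_mi i" x x]
    by (cases "k i = 0") (auto simp: P_def le_fun_def nat_diff_distrib order_le_less)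
  have "((\<lambda>t. x $ i + t) has_real_derivative 1) (at 0)"
    by (auto intro!: derivative_eq_intros)
  from DERIV_chain'[OF this hermite_has_real_derivative]
  have "((\<lambda>t. hermite (nat (k i)) (x $ i + t) * P) has_real_derivative
      2 * real (nat (k i)) * hermite (nat (k i) - 1) (x $ i) * P) (at 0)"
    by (auto intro!: derivative_eq_intros)
  then show ?thesis
    by (simp add: line lower mult.assoc)
qed

lemma hermite_multi_int_mult_coord:
  assumes "0 \<le> k"
  shows "x $ l * hermite_multi_int k x =
    hermite_multi_int (k + unit_mi l) x / 2 + of_int (k l) * hermite_multi_int (k - unit_mi l) x"
proof -
  define P where "P = (\<Prod>m\<in>UNIV - {l}. hermite (nat (k m)) (x $ m))"
  have "hermite_multi_int k x = hermite (nat (k l)) (x $ l) * P"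
    and "hermite_multi_int (k + unit_mi l) x = hermite (Suc (nat (k l))) (x $ l) * P"
    using assms hermite_multi_int_coord[OF assms, of l _ x x]
    by (auto simp: P_def le_fun_def Suc_nat_eq_nat_zadd1 add.commute)
  moreover have "of_int (k l) * hermite_multi_int (k - unit_mi l) x
      = real (nat (k l)) * hermite (nat (k l) - 1) (x $ l) * P"
    using assms hermite_multi_int_coord[OF assms, of l "k - unit_mi l" x x]
    by (cases "k l = 0") (auto simp: P_def le_fun_def nat_diff_distrib order_le_less)
  ultimately show ?thesis
    using hermite_mult_x[of "x $ l" "nat (k l)"] by (simp add: algebra_simps)
qed

section \<open>Finitely supported Hermite series\<close>

definition finitely_supported :: "('a \<Rightarrow> 'b::zero) \<Rightarrow> bool" where
  "finitely_supported c \<longleftrightarrow> finite {k. c k \<noteq> 0}"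

lemma finitely_supported_zero [simp, intro]: "finitely_supported (\<lambda>k. 0)"
  by (simp add: finitely_supported_def)

lemma finitely_supported_add [simp, intro]:
  "finitely_supported c \<Longrightarrow> finitely_supported d \<Longrightarrow> finitely_supported (\<lambda>k. c k + d k)"
  for c d :: "'a \<Rightarrow> 'b::monoid_add"
  unfolding finitely_supported_def
  by (rule finite_subset[of _ "{k. c k \<noteq> 0} \<union> {k. d k \<noteq> 0}"]) auto

lemma finitely_supported_diff [simp, intro]:
  "finitely_supported c \<Longrightarrow> finitely_supported d \<Longrightarrow> finitely_supported (\<lambda>k. c k - d k)"
  for c d :: "'a \<Rightarrow> 'b::group_add"
  unfolding finitely_supported_def
  by (rule finite_subset[of _ "{k. c k \<noteq> 0} \<union> {k. d k \<noteq> 0}"]) auto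

lemma finitely_supported_uminus [simp, intro]:
  "finitely_supported c \<Longrightarrow> finitely_supported (\<lambda>k. - c k)"
  for c :: "'a \<Rightarrow> 'b::group_add"
  by (simp add: finitely_supported_def)

lemma finitely_supported_mult_left [simp, intro]:
  "finitely_supported c \<Longrightarrow> finitely_supported (\<lambda>k. r k * c k)"
  for c :: "'a \<Rightarrow> 'b::mult_zero"
  unfolding finitely_supported_def by (rule finite_subset[of _ "{k. c k \<noteq> 0}"]) auto

lemma finitely_supported_divide [simp, intro]:
  "finitely_supported c \<Longrightarrow> finitely_supported (\<lambda>k. c k / r)"
  for c :: "'a \<Rightarrow> 'b::field"
  by (simp add: finitely_supported_def)

lemma finitely_supported_sum [simp, intro]:
  "finite I \<Longrightarrow> (\<And>i. i \<in> I \<Longrightarrow> finitely_supported (c i)) \<Longrightarrow>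
    finitely_supported (\<lambda>k. \<Sum>i\<in>I. c i k)"
  for c :: "'i \<Rightarrow> 'a \<Rightarrow> 'b::comm_monoid_add"
  by (induction I rule: finite_induct) auto

lemma finitely_supported_shift [simp, intro]:
  "finitely_supported c \<Longrightarrow> finitely_supported (\<lambda>k. c (k + v))"
  for v :: "'a::group_add"
proof -
  assume "finitely_supported c"
  moreover have "{k. c (k + v) \<noteq> 0} = (\<lambda>k. k + v) -` {k. c k \<noteq> 0}"
    by auto
  ultimately show ?thesis
    unfolding finitely_supported_def by (metis finite_vimageI bij_is_inj bij_plus_right)
qed

lemma finitely_supported_shift_diff [simp, intro]:
  "finitely_supported c \<Longrightarrow> finitely_supported (\<lambda>k. c (k - v))"
  for v :: "'a::group_add"
  using finitely_supported_shift[of c "- v"] by simp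

lemma Sum_any_shift: "Sum_any f = (\<Sum>k. f (k + v))"
  for v :: "'a::group_add"
  by (rule Sum_any.reindex_cong[OF bij_plus_right]) (simp add: comp_def)

definition hermite_series :: "(('n::finite \<Rightarrow> int) \<Rightarrow> real) \<Rightarrow> real^'n \<Rightarrow> real" where
  "hermite_series c x = (\<Sum>k. c k * hermite_multi_int k x)"

lemma hermite_series_eq_sum:
  assumes "finite F" and "\<And>k. c k \<noteq> 0 \<Longrightarrow> k \<in> F"
  shows "hermite_series c x = (\<Sum>k\<in>F. c k * hermite_multi_int k x)"
  unfolding hermite_series_def using assms by (intro Sum_any.expand_superset) auto

lemma hermite_series_cong:
  assumes "\<And>k. 0 \<le> k \<Longrightarrow> c k = d k"
  shows "hermite_series c x = hermite_series d x"
  unfolding hermite_series_def using assms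
  by (intro Sum_any.cong) (simp add: hermite_multi_int_def)

lemma hermite_series_zero: "hermite_series (\<lambda>k. 0) x = 0"
  by (simp add: hermite_series_def)

lemma hermite_series_add:
  assumes "finitely_supported c" and "finitely_supported d"
  shows "hermite_series (\<lambda>k. c k + d k) x = hermite_series c x + hermite_series d x"
proof -
  have "finitely_supported (\<lambda>k. c k * hermite_multi_int k x)"
    and "finitely_supported (\<lambda>k. d k * hermite_multi_int k x)"
    using assms by (auto simp: mult.commute[of _ "hermite_multi_int _ x"])
  then show ?thesis
    unfolding hermite_series_def finitely_supported_def
    by (simp add: Sum_any.distrib[symmetric] distrib_right)
qed

lemma hermite_series_cmult:
  assumes "finitely_supported c"
  shows "hermite_series (\<lambda>k. r * c k) x = r * hermite_series c x"
proof -
  have "finitely_supported (\<lambda>k. c k * hermite_multi_int k x)"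
    using assms by (auto simp: mult.commute[of _ "hermite_multi_int _ x"])
  then show ?thesis
    unfolding hermite_series_def finitely_supported_def
    by (simp add: Sum_any_right_distrib mult.assoc)
qed

lemma hermite_series_minus:
  "finitely_supported c \<Longrightarrow> hermite_series (\<lambda>k. - c k) x = - hermite_series c x"
  using hermite_series_cmult[of c "-1" x] by simp

lemma hermite_series_diff:
  "finitely_supported c \<Longrightarrow> finitely_supported d \<Longrightarrow>
    hermite_series (\<lambda>k. c k - d k) x = hermite_series c x - hermite_series d x"
  using hermite_series_add[of c "\<lambda>k. - d k" x] by (simp add: hermite_series_minus)

lemma hermite_series_sum:
  "finite I \<Longrightarrow> (\<And>i. i \<in> I \<Longrightarrow> finitely_supported (c i)) \<Longrightarrow>
    hermite_series (\<lambda>k. \<Sum>i\<in>I. c i k) x = (\<Sum>i\<in>I. hermite_series (c i) x)"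
  by (induction I rule: finite_induct) (simp_all add: hermite_series_zero hermite_series_add)

lemma hermite_series_delta: "hermite_series (\<lambda>q. if q = 0 then C else 0) x = C"
proof -
  have "hermite_multi_int 0 x = 1"
    by (simp add: hermite_multi_int_def hermite_multi_def)
  then have pointwise: "(if q = 0 then C else 0) * hermite_multi_int q x = (if q = 0 then C else 0)" for q
    by simp
  show ?thesis
    unfolding hermite_series_def pointwise by simp
qed

lemma finitely_supported_delta [simp, intro]: "finitely_supported (\<lambda>q. if q = a then C else 0)"
  unfolding finitely_supported_def by (rule finite_subset[of _ "{a}"]) auto

(* \<partial>\<^sub>i and multiplication by x\<^sub>l acting on coefficient families: the Hermite identities for
   \<partial>\<^sub>i H\<^sub>k and x\<^sub>l H\<^sub>k, followed by reindexing the sum. *)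
definition coeff_deriv :: "'n \<Rightarrow> (('n::finite \<Rightarrow> int) \<Rightarrow> real) \<Rightarrow> ('n \<Rightarrow> int) \<Rightarrow> real" where
  "coeff_deriv i c q = 2 * of_int (q i + 1) * c (q + unit_mi i)"

definition coeff_mult_coord :: "'n \<Rightarrow> (('n::finite \<Rightarrow> int) \<Rightarrow> real) \<Rightarrow> ('n \<Rightarrow> int) \<Rightarrow> real" where
  "coeff_mult_coord l c q = c (q - unit_mi l) / 2 + of_int (q l + 1) * c (q + unit_mi l)"

lemma finitely_supported_coeff_deriv [simp, intro]:
  "finitely_supported c \<Longrightarrow> finitely_supported (coeff_deriv i c)"
  unfolding coeff_deriv_def by (intro finitely_supported_mult_left finitely_supported_shift)

lemma finitely_supported_coeff_mult_coord [simp, intro]: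
  "finitely_supported c \<Longrightarrow> finitely_supported (coeff_mult_coord l c)"
  unfolding coeff_mult_coord_def by (intro finitely_supported_add) auto

lemma coeff_deriv_nonneg_support:
  assumes "\<And>k. c k \<noteq> 0 \<Longrightarrow> 0 \<le> k" and "coeff_deriv i c q \<noteq> 0"
  shows "0 \<le> q"
proof -
  from assms have "q i + 1 \<noteq> 0" and shifted: "0 \<le> q + unit_mi i"
    by (auto simp: coeff_deriv_def)
  have "0 \<le> q j" for j
    using \<open>q i + 1 \<noteq> 0\<close> le_funD[OF shifted, of j] by (cases "j = i") auto
  then show ?thesis
    by (simp add: le_fun_def)
qed

lemma hermite_series_line_deriv:
  assumes "finitely_supported c"
  shows "((\<lambda>t. hermite_series c (x + t *\<^sub>R axis i 1)) has_real_derivative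
           hermite_series (coeff_deriv i c) x) (at 0)"
proof -
  define F where "F = {k. c k \<noteq> 0}"
  have F: "finite F"
    using assms by (simp add: F_def finitely_supported_def)
  have series: "hermite_series c = (\<lambda>y. \<Sum>k\<in>F. c k * hermite_multi_int k y)"
    using F by (intro ext hermite_series_eq_sum) (auto simp: F_def)
  have "((\<lambda>t. \<Sum>k\<in>F. c k * hermite_multi_int k (x + t *\<^sub>R axis i 1)) has_real_derivative
      (\<Sum>k\<in>F. c k * (2 * of_int (k i) * hermite_multi_int (k - unit_mi i) x))) (at 0)"
    by (intro DERIV_sum DERIV_cmult hermite_multi_int_line_deriv)
  also have "(\<Sum>k\<in>F. c k * (2 * of_int (k i) * hermite_multi_int (k - unit_mi i) x))
      = (\<Sum>k. c k * (2 * of_int (k i) * hermite_multi_int (k - unit_mi i) x))"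
    using F by (intro Sum_any.expand_superset[symmetric]) (auto simp: F_def)
  also have "\<dots> = hermite_series (coeff_deriv i c) x"
    unfolding hermite_series_def coeff_deriv_def
    by (subst Sum_any_shift[where v = "unit_mi i"]) (simp add: mult_ac)
  finally show ?thesis
    unfolding series .
qed

lemma partial_deriv_hermite_series:
  "finitely_supported c \<Longrightarrow> partial_deriv i (hermite_series c) = hermite_series (coeff_deriv i c)"
  unfolding partial_deriv_def by (intro ext DERIV_imp_deriv hermite_series_line_deriv)

lemma hermite_series_mult_coord:
  assumes "finitely_supported c" and "\<And>k. c k \<noteq> 0 \<Longrightarrow> 0 \<le> k"
  shows "x $ l * hermite_series c x = hermite_series (coeff_mult_coord l c) x"
proof -
  have fin: "finite {k. c k \<noteq> 0}"
    using assms(1) by (simp add: finitely_supported_def)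
  have fin_raise: "finite {k. c k / 2 * hermite_multi_int (k + unit_mi l) x \<noteq> 0}"
    and fin_lower: "finite {k. of_int (k l) * c k * hermite_multi_int (k - unit_mi l) x \<noteq> 0}"
    and fin_series: "finite {k. c k * hermite_multi_int k x \<noteq> 0}"
    by (rule finite_subset[OF _ fin]; auto)+
  have raise: "hermite_series (\<lambda>q. c (q - unit_mi l) / 2) x
      = (\<Sum>k. c k / 2 * hermite_multi_int (k + unit_mi l) x)"
    unfolding hermite_series_def by (subst Sum_any_shift[where v = "unit_mi l"]) simp
  have lower: "hermite_series (\<lambda>q. of_int (q l + 1) * c (q + unit_mi l)) x
      = (\<Sum>k. of_int (k l) * c k * hermite_multi_int (k - unit_mi l) x)"
    unfolding hermite_series_def by (subst Sum_any_shift[where v = "- unit_mi l"]) simp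
  have pointwise: "c k / 2 * hermite_multi_int (k + unit_mi l) x
      + of_int (k l) * c k * hermite_multi_int (k - unit_mi l) x
      = x $ l * (c k * hermite_multi_int k x)" for k
    using hermite_multi_int_mult_coord[OF assms(2), of k x l]
    by (cases "c k = 0") (simp_all add: field_simps)
  have "hermite_series (coeff_mult_coord l c) x
      = hermite_series (\<lambda>q. c (q - unit_mi l) / 2) x
        + hermite_series (\<lambda>q. of_int (q l + 1) * c (q + unit_mi l)) x"
    unfolding coeff_mult_coord_def using assms(1) by (intro hermite_series_add) auto
  also have "\<dots> = (\<Sum>k. c k / 2 * hermite_multi_int (k + unit_mi l) x
                       + of_int (k l) * c k * hermite_multi_int (k - unit_mi l) x)"
    unfolding raise lower by (rule Sum_any.distrib[OF fin_raise fin_lower, symmetric])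
  also have "\<dots> = x $ l * hermite_series c x"
    unfolding pointwise hermite_series_def by (rule Sum_any_right_distrib[OF fin_series, symmetric])
  finally show ?thesis ..
qed

section \<open>The recursion system\<close>

definition recursion_lhs :: "real^'n^'n \<Rightarrow> (('n::finite \<Rightarrow> int) \<Rightarrow> real) \<Rightarrow> ('n \<Rightarrow> int) \<Rightarrow> real" where
  "recursion_lhs S c q =
     (\<Sum>l\<in>UNIV. S$l$l * of_int (q l) * c q)
   + (\<Sum>l\<in>UNIV. \<Sum>m\<in>UNIV - {l}. S$l$m * of_int (q m + 1) * c (q + unit_mi m - unit_mi l))"

definition recursion_rhs ::
  "real^'n^'n \<Rightarrow> real^'n \<Rightarrow> (('n::finite \<Rightarrow> int) \<Rightarrow> real) \<Rightarrow> ('n \<Rightarrow> int) \<Rightarrow> real" where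
  "recursion_rhs S X c q =
     (\<Sum>l\<in>UNIV. \<Sum>m\<in>UNIV. 2 * S$l$m * of_int (q m + 1) * X$l * c (q + unit_mi m))
   - (\<Sum>l\<in>UNIV. \<Sum>m\<in>UNIV - {l}.
        2 * S$l$m * of_int (q m + 1) * of_int (q l + 1) * c (q + unit_mi m + unit_mi l))
   + (\<Sum>l\<in>UNIV. 2 * (2 - S$l$l) * of_int (q l + 1) * of_int (q l + 2) * c (q + 2 * unit_mi l))"

lemma coeff_deriv_twice:
  "coeff_deriv l (coeff_deriv l c) q = 4 * of_int (q l + 1) * of_int (q l + 2) * c (q + 2 * unit_mi l)"
proof -
  have "q + unit_mi l + unit_mi l = q + 2 * unit_mi l"
    by (simp add: fun_eq_iff)
  then show ?thesis
    by (simp add: coeff_deriv_def add_ac) (simp add: algebra_simps)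
qed

lemma coeff_mult_coord_deriv:
  "coeff_mult_coord l (coeff_deriv m c) q =
    (if m = l then of_int (q l) * c q + 2 * of_int (q l + 1) * of_int (q l + 2) * c (q + 2 * unit_mi l)
     else of_int (q m + 1) * c (q + unit_mi m - unit_mi l)
       + 2 * of_int (q m + 1) * of_int (q l + 1) * c (q + unit_mi m + unit_mi l))"
proof -
  have "q + unit_mi l + unit_mi l = q + 2 * unit_mi l"
    by (simp add: fun_eq_iff)
  moreover have "q - unit_mi l + unit_mi m = q + unit_mi m - unit_mi l"
    and "q + unit_mi l + unit_mi m = q + unit_mi m + unit_mi l"
    by (simp_all add: algebra_simps)
  ultimately show ?thesis
    by (simp add: coeff_mult_coord_def coeff_deriv_def algebra_simps)
qed

lemma drift_diffusion_coeff:
  fixes S :: "real^'n::finite^'n"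
  shows "- (\<Sum>l\<in>UNIV. \<Sum>m\<in>UNIV. S$l$m * (coeff_mult_coord l (coeff_deriv m c) q - X$l * coeff_deriv m c q))
      + (\<Sum>l\<in>UNIV. coeff_deriv l (coeff_deriv l c) q)
    = recursion_rhs S X c q - recursion_lhs S c q"
proof -
  have per_coord: "- (\<Sum>m\<in>UNIV. S$l$m * (coeff_mult_coord l (coeff_deriv m c) q - X$l * coeff_deriv m c q))
      + coeff_deriv l (coeff_deriv l c) q
    = (\<Sum>m\<in>UNIV. 2 * S$l$m * of_int (q m + 1) * X$l * c (q + unit_mi m))
      - (\<Sum>m\<in>UNIV - {l}. 2 * S$l$m * of_int (q m + 1) * of_int (q l + 1) * c (q + unit_mi m + unit_mi l))
      + 2 * (2 - S$l$l) * of_int (q l + 1) * of_int (q l + 2) * c (q + 2 * unit_mi l)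
      - (S$l$l * of_int (q l) * c q
         + (\<Sum>m\<in>UNIV - {l}. S$l$m * of_int (q m + 1) * c (q + unit_mi m - unit_mi l)))" for l
  proof -
    have "(\<Sum>m\<in>UNIV. S$l$m * coeff_mult_coord l (coeff_deriv m c) q)
        = S$l$l * (of_int (q l) * c q + 2 * of_int (q l + 1) * of_int (q l + 2) * c (q + 2 * unit_mi l))
          + (\<Sum>m\<in>UNIV - {l}. S$l$m * of_int (q m + 1) * c (q + unit_mi m - unit_mi l))
          + (\<Sum>m\<in>UNIV - {l}. 2 * S$l$m * of_int (q m + 1) * of_int (q l + 1) * c (q + unit_mi m + unit_mi l))"
      by (simp add: sum.remove[of UNIV l] coeff_mult_coord_deriv sum.distrib[symmetric] algebra_simps)
    moreover have "(\<Sum>m\<in>UNIV. S$l$m * (X$l * coeff_deriv m c q))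
        = (\<Sum>m\<in>UNIV. 2 * S$l$m * of_int (q m + 1) * X$l * c (q + unit_mi m))"
      by (intro sum.cong) (simp_all add: coeff_deriv_def algebra_simps)
    ultimately show ?thesis
      by (simp add: right_diff_distrib sum_subtractf coeff_deriv_twice algebra_simps)
  qed
  have "- (\<Sum>l\<in>UNIV. \<Sum>m\<in>UNIV. S$l$m * (coeff_mult_coord l (coeff_deriv m c) q - X$l * coeff_deriv m c q))
      + (\<Sum>l\<in>UNIV. coeff_deriv l (coeff_deriv l c) q)
    = (\<Sum>l\<in>UNIV. - (\<Sum>m\<in>UNIV. S$l$m * (coeff_mult_coord l (coeff_deriv m c) q - X$l * coeff_deriv m c q))
      + coeff_deriv l (coeff_deriv l c) q)"
    by (simp only: sum.distrib sum_negf)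
  also have "\<dots> = recursion_rhs S X c q - recursion_lhs S c q"
    unfolding per_coord recursion_rhs_def recursion_lhs_def by (simp only: sum.distrib sum_subtractf)
  finally show ?thesis .
qed

lemma drift_diffusion_hermite_series:
  fixes S :: "real^'n::finite^'n"
  assumes fin: "finitely_supported c" and nonneg: "\<And>k. c k \<noteq> 0 \<Longrightarrow> 0 \<le> k"
  shows "- (\<Sum>l\<in>UNIV. \<Sum>m\<in>UNIV. (x$l - X$l) * S$l$m * partial_deriv m (hermite_series c) x)
      + laplacian (hermite_series c) x
    = hermite_series (\<lambda>q. recursion_rhs S X c q - recursion_lhs S c q) x"
proof -
  define drift where
    "drift l m = (\<lambda>q. S$l$m * (coeff_mult_coord l (coeff_deriv m c) q - X$l * coeff_deriv m c q))" for l m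
  have fin_drift: "finitely_supported (drift l m)" for l m
    using fin by (simp add: drift_def)
  have "(x$l - X$l) * S$l$m * partial_deriv m (hermite_series c) x = hermite_series (drift l m) x" for l m
  proof -
    have mult: "hermite_series (coeff_mult_coord l (coeff_deriv m c)) x
        = x $ l * hermite_series (coeff_deriv m c) x"
      using fin coeff_deriv_nonneg_support[OF nonneg]
      by (intro hermite_series_mult_coord[symmetric]) auto
    have "hermite_series (drift l m) x = S$l$m * (hermite_series (coeff_mult_coord l (coeff_deriv m c)) x
        - X$l * hermite_series (coeff_deriv m c) x)"
      using fin unfolding drift_def by (simp add: hermite_series_cmult hermite_series_diff)
    then show ?thesis
      unfolding partial_deriv_hermite_series[OF fin] mult by (simp add: algebra_simps)
  qed
  moreover have "partial_deriv l (partial_deriv l (hermite_series c)) x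
      = hermite_series (coeff_deriv l (coeff_deriv l c)) x" for l
    using fin by (simp add: partial_deriv_hermite_series)
  moreover have "hermite_series (\<lambda>q. \<Sum>l\<in>UNIV. \<Sum>m\<in>UNIV. drift l m q) x
      = (\<Sum>l\<in>UNIV. \<Sum>m\<in>UNIV. hermite_series (drift l m) x)"
    using fin_drift by (subst hermite_series_sum) (auto simp: hermite_series_sum)
  moreover have "hermite_series (\<lambda>q. \<Sum>l\<in>UNIV. coeff_deriv l (coeff_deriv l c) q) x
      = (\<Sum>l\<in>UNIV. hermite_series (coeff_deriv l (coeff_deriv l c)) x)"
    using fin by (subst hermite_series_sum) auto
  moreover have "finitely_supported (\<lambda>q. \<Sum>l\<in>UNIV. \<Sum>m\<in>UNIV. drift l m q)"
    and "finitely_supported (\<lambda>q. \<Sum>l\<in>UNIV. coeff_deriv l (coeff_deriv l c) q)"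
    using fin fin_drift by (intro finitely_supported_sum; auto)+
  ultimately have "- (\<Sum>l\<in>UNIV. \<Sum>m\<in>UNIV. (x$l - X$l) * S$l$m * partial_deriv m (hermite_series c) x)
      + laplacian (hermite_series c) x
    = hermite_series (\<lambda>q. - (\<Sum>l\<in>UNIV. \<Sum>m\<in>UNIV. drift l m q)
                            + (\<Sum>l\<in>UNIV. coeff_deriv l (coeff_deriv l c) q)) x"
    by (simp add: laplacian_def hermite_series_diff)
  also have "\<dots> = hermite_series (\<lambda>q. recursion_rhs S X c q - recursion_lhs S c q) x"
    unfolding drift_def drift_diffusion_coeff ..
  finally show ?thesis .
qed

definition lift_coeffs :: "nat \<Rightarrow> (('n::finite \<Rightarrow> nat) \<Rightarrow> real) \<Rightarrow> ('n \<Rightarrow> int) \<Rightarrow> real" where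
  "lift_coeffs p a q = (if 0 \<le> q \<and> sum q UNIV \<le> int p then a (nat \<circ> q) else 0)"

lemma finite_multi_index_set: "finite (multi_index_set p :: ('n::finite \<Rightarrow> nat) set)"
proof (rule finite_subset)
  show "multi_index_set p \<subseteq> (\<Pi>\<^sub>E l\<in>UNIV. {..p} :: ('n \<Rightarrow> nat) set)"
  proof
    fix k :: "'n \<Rightarrow> nat"
    assume "k \<in> multi_index_set p"
    moreover have "k l \<le> sum k UNIV" for l
      by (rule member_le_sum) auto
    ultimately show "k \<in> (\<Pi>\<^sub>E l\<in>UNIV. {..p})"
      by (auto simp: multi_index_set_def intro: order.trans)
  qed
qed (simp add: finite_PiE)

lemma lift_coeffs_support:
  "lift_coeffs p a q \<noteq> 0 \<Longrightarrow> q \<in> (\<lambda>k. int \<circ> k) ` multi_index_set p"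
proof -
  assume "lift_coeffs p a q \<noteq> 0"
  then have "0 \<le> q" and "sum q UNIV \<le> int p"
    by (auto simp: lift_coeffs_def split: if_splits)
  have "int (\<Sum>l\<in>UNIV. nat (q l)) = sum q UNIV"
    using \<open>0 \<le> q\<close> by (simp add: of_nat_sum le_fun_def)
  with \<open>sum q UNIV \<le> int p\<close> have "(\<Sum>l\<in>UNIV. nat (q l)) \<le> p"
    by linarith
  then have "nat \<circ> q \<in> multi_index_set p"
    by (simp add: multi_index_set_def)
  moreover have "q = int \<circ> (nat \<circ> q)"
    using \<open>0 \<le> q\<close> by (simp add: le_fun_def fun_eq_iff)
  ultimately show ?thesis
    by blast
qed

lemma finitely_supported_lift_coeffs [simp, intro]: "finitely_supported (lift_coeffs p a)"
  unfolding finitely_supported_def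
  by (rule finite_subset[OF _ finite_imageI[OF finite_multi_index_set]]) (use lift_coeffs_support in blast)

lemma hermite_multi_int_of_nat [simp]: "hermite_multi_int (int \<circ> k) x = hermite_multi k x"
  by (simp add: hermite_multi_int_def le_fun_def comp_def)

lemma lift_coeffs_of_nat: "k \<in> multi_index_set p \<Longrightarrow> lift_coeffs p a (int \<circ> k) = a k"
  by (simp add: lift_coeffs_def multi_index_set_def le_fun_def comp_def flip: of_nat_sum)

lemma herm_expansion_eq_hermite_series:
  "herm_expansion a p x = hermite_series (lift_coeffs p a) x"
proof -
  have inj: "inj_on (\<lambda>k. int \<circ> k) (multi_index_set p)"
    by (auto intro!: inj_onI simp: fun_eq_iff)
  have "hermite_series (lift_coeffs p a) x
      = (\<Sum>q\<in>(\<lambda>k. int \<circ> k) ` multi_index_set p. lift_coeffs p a q * hermite_multi_int q x)"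
    by (intro hermite_series_eq_sum finite_imageI finite_multi_index_set lift_coeffs_support)
  also have "\<dots> = (\<Sum>k\<in>multi_index_set p. lift_coeffs p a (int \<circ> k) * hermite_multi_int (int \<circ> k) x)"
    by (subst sum.reindex[OF inj]) (simp only: comp_def)
  also have "\<dots> = herm_expansion a p x"
    unfolding herm_expansion_def by (intro sum.cong) (simp_all add: lift_coeffs_of_nat)
  finally show ?thesis ..
qed

lemma recursion_system_vanishes:
  "recursion_system S X a p phi \<Longrightarrow> int p < sum k UNIV \<or> (\<exists>l. k l < 0) \<Longrightarrow> phi k = 0"
  unfolding recursion_system_def by blast

lemma recursion_system_support:
  assumes "recursion_system S X a p phi" and "phi k \<noteq> 0"
  shows "0 \<le> k" and "sum k UNIV \<le> int p"
proof -
  have "\<not> (int p < sum k UNIV \<or> (\<exists>l. k l < 0))"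
    using recursion_system_vanishes[OF assms(1), of k] assms(2) by blast
  then show "0 \<le> k" and "sum k UNIV \<le> int p"
    by (auto simp: le_fun_def not_less)
qed

lemma recursion_system_eq_lift_coeffs:
  assumes "recursion_system S X a p phi"
  shows "lift_coeffs p (\<lambda>k. phi (\<lambda>j. int (k j))) = phi"
proof
  fix q
  show "lift_coeffs p (\<lambda>k. phi (\<lambda>j. int (k j))) q = phi q"
  proof (cases "0 \<le> q \<and> sum q UNIV \<le> int p")
    case True
    then have "(\<lambda>j. int (nat (q j))) = q"
      by (simp add: le_fun_def fun_eq_iff)
    with True show ?thesis
      by (simp add: lift_coeffs_def)
  next
    case False
    then show ?thesis
      using recursion_system_support[OF assms, of q] by (auto simp: lift_coeffs_def)
  qed
qed

lemma sum_unit_mi [simp]: "sum (unit_mi l) UNIV = 1" for l :: "'n::finite"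
  by (simp add: unit_mi_def)

lemma recursion_system_vanishes_above:
  assumes "recursion_system S X a p phi" and "int p < sum q UNIV" and "0 \<le> sum v UNIV"
  shows "phi (q + v) = 0"
proof -
  have "sum (q + v) UNIV = sum q UNIV + sum v UNIV"
    by (simp add: plus_fun_def sum.distrib)
  then show ?thesis
    using assms by (intro recursion_system_vanishes) auto
qed

lemma recursion_system_step:
  assumes "recursion_system S X a p phi" and "1 \<le> sum q UNIV" and "sum q UNIV \<le> p"
  shows "recursion_lhs S phi (int \<circ> q) = a q + recursion_rhs S X phi (int \<circ> q)"
proof -
  have index: "phi (int \<circ> q) = phi (\<lambda>j. int (q j))"
    "(int \<circ> q) + unit_mi m - unit_mi l = (\<lambda>j. int (q j) + unit_mi m j - unit_mi l j)"
    "(int \<circ> q) + unit_mi m = (\<lambda>j. int (q j) + unit_mi m j)"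
    "(int \<circ> q) + unit_mi m + unit_mi l = (\<lambda>j. int (q j) + unit_mi m j + unit_mi l j)"
    "(int \<circ> q) + 2 * unit_mi l = (\<lambda>j. int (q j) + 2 * unit_mi l j)"
    for m l by (simp_all add: fun_eq_iff comp_def)
  have coeff: "real_of_int ((int \<circ> q) m) = real (q m)"
    "real_of_int ((int \<circ> q) m + 1) = real (q m + 1)"
    "real_of_int ((int \<circ> q) m + 2) = real (q m + 2)"
    for m by simp_all
  note step = conjunct2[OF assms(1)[unfolded recursion_system_def], rule_format, OF conjI[OF assms(2,3)]]
  show ?thesis
    unfolding recursion_lhs_def recursion_rhs_def index(1,2,4,5) coeff unfolding index(3)
    using step by linarith
qed

lemma recursion_lhs_zero:
  assumes "recursion_system S X a p phi"
  shows "recursion_lhs S phi 0 = 0"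
proof -
  have "phi (unit_mi m - unit_mi l) = 0" if "m \<noteq> l" for m l
  proof -
    have "\<not> 0 \<le> unit_mi m - unit_mi l"
      using that by (auto simp: le_fun_def intro!: exI[of _ l])
    then show ?thesis
      using recursion_system_support(1)[OF assms] by blast
  qed
  then show ?thesis
    by (simp add: recursion_lhs_def)
qed

lemma recursion_rhs_zero:
  "recursion_rhs S X phi 0 = recursion_const S X a phi - a (\<lambda>_. 0)"
proof -
  have "unit_mi m + unit_mi l = (\<lambda>j. unit_mi m j + unit_mi l j)"
    and "2 * unit_mi l = (\<lambda>j. 2 * unit_mi l j)" for m l :: 'a
    by (simp_all add: fun_eq_iff)
  moreover have "2 * (2 - S$l$l) * 2 * c = 4 * (2 - S$l$l) * c" for l and c :: real
    by simp
  ultimately show ?thesis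
    by (simp add: recursion_rhs_def recursion_const_def)
qed

lemma recursion_rhs_minus_lhs:
  fixes S :: "real^'n::finite^'n"
  assumes R: "recursion_system S X a p phi" and "0 \<le> q"
  shows "recursion_rhs S X phi q - recursion_lhs S phi q
    = (if q = 0 then recursion_const S X a phi else 0) - lift_coeffs p a q"
proof -
  have "0 \<le> sum q UNIV"
    using \<open>0 \<le> q\<close> by (simp add: sum_nonneg le_fun_def)
  then consider "sum q UNIV = 0" | "1 \<le> sum q UNIV" "sum q UNIV \<le> int p" | "int p < sum q UNIV"
    by linarith
  then show ?thesis
  proof cases
    case 1
    then have "q = 0"
      using \<open>0 \<le> q\<close> by (simp add: sum_nonneg_eq_0_iff le_fun_def fun_eq_iff)
    moreover have "lift_coeffs p a 0 = a (\<lambda>_. 0)"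
      by (simp add: lift_coeffs_def comp_def)
    ultimately show ?thesis
      by (simp add: recursion_lhs_zero[OF R] recursion_rhs_zero)
  next
    case 2
    define n where "n = nat \<circ> q"
    have q: "q = int \<circ> n"
      using \<open>0 \<le> q\<close> by (simp add: n_def le_fun_def fun_eq_iff)
    have "sum q UNIV = int (sum n UNIV)"
      by (simp add: q)
    then have "1 \<le> sum n UNIV" "sum n UNIV \<le> p"
      using 2 by linarith+
    moreover have "q \<noteq> 0"
      using 2 by auto
    ultimately show ?thesis
      using recursion_system_step[OF R] 2 by (simp add: q lift_coeffs_def comp_def le_fun_def)
  next
    case 3
    have shifted: "phi (q + v) = 0" if "0 \<le> sum v UNIV" for v
      using recursion_system_vanishes_above[OF R 3 that] .
    have "phi q = 0"
      using recursion_system_vanishes[OF R] 3 by blast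
    moreover have "phi (q + unit_mi m - unit_mi l) = 0" for m l
    proof -
      have "sum (unit_mi m - unit_mi l) UNIV = 0"
        by (simp add: fun_diff_def sum_subtractf)
      then show ?thesis
        using shifted[of "unit_mi m - unit_mi l"] by (simp add: add_diff_eq)
    qed
    moreover have "phi (q + unit_mi m) = 0" for m
      using shifted[of "unit_mi m"] by simp
    moreover have "phi (q + unit_mi m + unit_mi l) = 0" for m l
    proof -
      have "sum (unit_mi m + unit_mi l) UNIV = 2"
        by (simp add: plus_fun_def sum.distrib)
      then show ?thesis
        using shifted[of "unit_mi m + unit_mi l"] by (simp add: add.assoc)
    qed
    moreover have "phi (q + 2 * unit_mi l) = 0" for l
    proof -
      have "sum (2 * unit_mi l) UNIV = 2"
        by (simp add: times_fun_def sum_distrib_left[symmetric])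
      then show ?thesis
        using shifted[of "2 * unit_mi l"] by simp
    qed
    ultimately have "recursion_lhs S phi q = 0" and "recursion_rhs S X phi q = 0"
      by (simp_all add: recursion_lhs_def recursion_rhs_def)
    moreover have "q \<noteq> 0"
      using 3 by auto
    ultimately show ?thesis
      using 3 by (simp add: lift_coeffs_def)
  qed
qed

lemma recursion_system_finitely_supported:
  "recursion_system S X a p phi \<Longrightarrow> finitely_supported phi"
  using finitely_supported_lift_coeffs by (metis recursion_system_eq_lift_coeffs)

lemma recursion_system_drift_diffusion:
  fixes S :: "real^'n::finite^'n"
  assumes R: "recursion_system S X a p phi"
  shows "- (\<Sum>l\<in>UNIV. \<Sum>m\<in>UNIV. (x$l - X$l) * S$l$m * partial_deriv m (hermite_series phi) x)
      + laplacian (hermite_series phi) x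
    = - herm_expansion a p x + recursion_const S X a phi"
proof -
  have "- (\<Sum>l\<in>UNIV. \<Sum>m\<in>UNIV. (x$l - X$l) * S$l$m * partial_deriv m (hermite_series phi) x)
      + laplacian (hermite_series phi) x
    = hermite_series (\<lambda>q. recursion_rhs S X phi q - recursion_lhs S phi q) x"
    using recursion_system_finitely_supported[OF R] recursion_system_support(1)[OF R]
    by (rule drift_diffusion_hermite_series)
  also have "\<dots> = hermite_series (\<lambda>q. (if q = 0 then recursion_const S X a phi else 0) - lift_coeffs p a q) x"
    by (intro hermite_series_cong recursion_rhs_minus_lhs[OF R])
  also have "\<dots> = - herm_expansion a p x + recursion_const S X a phi"
    by (simp add: hermite_series_diff hermite_series_delta herm_expansion_eq_hermite_series)
  finally show ?thesis .
qed

section \<open>The Gaussian weight\<close>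

lemma matrix_inv_symmetric:
  fixes A :: "real^'n::finite^'n"
  assumes sym: "transpose A = A" and pos: "\<And>v. v \<noteq> 0 \<Longrightarrow> 0 < v \<bullet> (A *v v)"
  shows "transpose (matrix_inv A) = matrix_inv A"
proof -
  have "inj ((*v) A)"
  proof (rule injI)
    fix u w
    assume "A *v u = A *v w"
    then have "A *v (u - w) = 0"
      by (simp add: matrix_vector_mult_diff_distrib)
    then show "u = w"
      using pos[of "u - w"] by auto
  qed
  then have "invertible A"
    using matrix_left_invertible_injective invertible_left_inverse by blast
  then have inv: "A ** matrix_inv A = mat 1" "matrix_inv A ** A = mat 1"
    unfolding matrix_inv_def invertible_def by (metis (mono_tags, lifting) someI_ex)+
  have "transpose (matrix_inv A) ** A = mat 1"
    using inv(1) sym by (metis matrix_transpose_mul transpose_mat)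
  then have "transpose (matrix_inv A) = transpose (matrix_inv A) ** (A ** matrix_inv A)"
    using inv(1) by simp
  also have "\<dots> = matrix_inv A"
    by (simp add: matrix_mul_assoc \<open>transpose (matrix_inv A) ** A = mat 1\<close>)
  finally show ?thesis .
qed

lemma quadratic_form_line_deriv:
  fixes S :: "real^'n::finite^'n"
  assumes "transpose S = S"
  shows "((\<lambda>t. (v + t *\<^sub>R axis i 1) \<bullet> (S *v (v + t *\<^sub>R axis i 1))) has_real_derivative
           2 * (S *v v) $ i) (at 0)"
proof -
  define e :: "real^'n" where "e = axis i 1"
  have "v \<bullet> (S *v e) = (\<Sum>j\<in>UNIV. v $ j * transpose S $ i $ j)"
    unfolding e_def inner_vec_def matrix_vector_mult_def
    by (simp add: axis_def transpose_def if_distrib cong: if_cong)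
  then have cross: "v \<bullet> (S *v e) = (S *v v) $ i"
    using assms by (simp add: matrix_vector_mult_def mult.commute)
  have "e \<bullet> (S *v v) = (S *v v) $ i"
    unfolding e_def by (simp add: inner_axis')
  then have "(\<lambda>t. (v + t *\<^sub>R e) \<bullet> (S *v (v + t *\<^sub>R e)))
      = (\<lambda>t. v \<bullet> (S *v v) + t * (2 * (S *v v) $ i) + t\<^sup>2 * (e \<bullet> (S *v e)))"
    using cross by (simp add: fun_eq_iff algebra_simps inner_add_left inner_add_right power2_eq_square)
  then show ?thesis
    unfolding e_def[symmetric] by (auto intro!: derivative_eq_intros)
qed

lemma gaussian_density_line_deriv:
  fixes Sig :: "real^'n::finite^'n"
  assumes "transpose (matrix_inv Sig) = matrix_inv Sig"
  shows "((\<lambda>t. gaussian_density X Sig (x + t *\<^sub>R axis i 1)) has_real_derivative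
           - (matrix_inv Sig *v (x - X)) $ i * gaussian_density X Sig x) (at 0)"
proof -
  define c where "c = sqrt ((2 * pi) ^ CARD('n) * det Sig)"
  define Q where "Q t = (x - X + t *\<^sub>R axis i 1) \<bullet> (matrix_inv Sig *v (x - X + t *\<^sub>R axis i 1))" for t
  have density: "gaussian_density X Sig (x + t *\<^sub>R axis i 1) = exp (- (1/2) * Q t) * (1 / c)" for t
    unfolding gaussian_density_def c_def Q_def by (simp add: algebra_simps)
  have "(Q has_real_derivative 2 * (matrix_inv Sig *v (x - X)) $ i) (at 0)"
    unfolding Q_def[abs_def] by (rule quadratic_form_line_deriv[OF assms])
  then have exp_deriv: "((\<lambda>t. exp (- (1/2) * Q t)) has_real_derivative
      - (matrix_inv Sig *v (x - X)) $ i * exp (- (1/2) * Q 0)) (at 0)"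
    by (auto intro!: derivative_eq_intros)
  have at_x: "gaussian_density X Sig x = exp (- (1/2) * Q 0) * (1 / c)"
    using density[of 0] by simp
  show ?thesis
    unfolding density at_x mult.assoc[symmetric] by (rule DERIV_cmult_right[OF exp_deriv])
qed

lemma divergence_gaussian_weighted_gradient:
  fixes Sig :: "real^'n::finite^'n"
  assumes sym: "transpose (matrix_inv Sig) = matrix_inv Sig"
    and diff: "\<And>i. (\<lambda>t. partial_deriv i f (x + t *\<^sub>R axis i 1)) differentiable (at 0)"
  shows "(\<Sum>i\<in>UNIV. partial_deriv i (\<lambda>y. gaussian_density X Sig y * partial_deriv i f y) x)
    = (- (\<Sum>l\<in>UNIV. \<Sum>m\<in>UNIV. (x$l - X$l) * matrix_inv Sig $l$m * partial_deriv m f x)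
       + laplacian f x) * gaussian_density X Sig x"
proof -
  define S where "S = matrix_inv Sig"
  define N where "N = gaussian_density X Sig"
  have product: "partial_deriv i (\<lambda>y. N y * partial_deriv i f y) x
      = N x * partial_deriv i (partial_deriv i f) x - N x * ((S *v (x - X)) $ i * partial_deriv i f x)" for i
  proof -
    have "partial_deriv i (partial_deriv i f) x = deriv (\<lambda>t. partial_deriv i f (x + t *\<^sub>R axis i 1)) 0"
      by (simp only: partial_deriv_def)
    then have "((\<lambda>t. partial_deriv i f (x + t *\<^sub>R axis i 1)) has_real_derivative
        partial_deriv i (partial_deriv i f) x) (at 0)"
      using diff[of i] by (simp add: DERIV_deriv_iff_real_differentiable)
    from DERIV_mult[OF gaussian_density_line_deriv[OF sym, of X x i] this]
    have "((\<lambda>t. N (x + t *\<^sub>R axis i 1) * partial_deriv i f (x + t *\<^sub>R axis i 1)) has_real_derivative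
        N x * partial_deriv i (partial_deriv i f) x - N x * ((S *v (x - X)) $ i * partial_deriv i f x)) (at 0)"
      unfolding S_def N_def by (simp add: algebra_simps)
    then show ?thesis
      unfolding partial_deriv_def[of i "\<lambda>y. N y * partial_deriv i f y"] by (rule DERIV_imp_deriv)
  qed
  have drift_coord: "(S *v (x - X)) $ m = (\<Sum>l\<in>UNIV. (x$l - X$l) * S$l$m)" for m
  proof -
    have "S $ m $ l = S $ l $ m" for l
      using sym unfolding S_def transpose_def by (metis vec_lambda_beta)
    then show ?thesis
      by (simp add: matrix_vector_mult_def mult.commute)
  qed
  have drift: "(\<Sum>i\<in>UNIV. (S *v (x - X)) $ i * partial_deriv i f x)
      = (\<Sum>l\<in>UNIV. \<Sum>m\<in>UNIV. (x$l - X$l) * S$l$m * partial_deriv m f x)"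
    unfolding drift_coord sum_distrib_right by (rule sum.swap)
  have "(\<Sum>i\<in>UNIV. partial_deriv i (\<lambda>y. N y * partial_deriv i f y) x)
      = N x * (laplacian f x - (\<Sum>i\<in>UNIV. (S *v (x - X)) $ i * partial_deriv i f x))"
    unfolding product laplacian_def by (simp only: sum_distrib_left sum_subtractf right_diff_distrib)
  also have "\<dots> = (- (\<Sum>l\<in>UNIV. \<Sum>m\<in>UNIV. (x$l - X$l) * S$l$m * partial_deriv m f x)
      + laplacian f x) * N x"
    unfolding drift by (simp add: algebra_simps)
  finally show ?thesis
    unfolding S_def N_def .
qed

theorem mainTheorem2:
  fixes X :: "real^'n::finite"
    and Sig :: "real^'n^'n"
    and a :: "('n \<Rightarrow> nat) \<Rightarrow> real"
    and phi :: "('n \<Rightarrow> int) \<Rightarrow> real"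
    and p :: nat
  assumes "p \<ge> 1"
    and "transpose Sig = Sig"
    and "\<forall>v. v \<noteq> 0 \<longrightarrow> v \<bullet> (Sig *v v) > 0"
    and "recursion_system (matrix_inv Sig) X a p phi"
  shows "\<forall>x::real^'n.
     - (\<Sum>l\<in>UNIV. \<Sum>m\<in>UNIV. (x$l - X$l) * (matrix_inv Sig)$l$m
          * partial_deriv m (herm_expansion (\<lambda>k. phi (\<lambda>j. int (k j))) p) x)
     + laplacian (herm_expansion (\<lambda>k. phi (\<lambda>j. int (k j))) p) x
     = - herm_expansion a p x + recursion_const (matrix_inv Sig) X a phi
   \<and> (\<Sum>i\<in>UNIV. partial_deriv i (\<lambda>y. gaussian_density X Sig y
          * partial_deriv i (herm_expansion (\<lambda>k. phi (\<lambda>j. int (k j))) p) y) x)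
     = (- herm_expansion a p x + recursion_const (matrix_inv Sig) X a phi)
          * gaussian_density X Sig x"
proof -
  note R = assms(4)
  have fin: "finitely_supported phi"
    by (rule recursion_system_finitely_supported[OF R])
  have series: "herm_expansion (\<lambda>k. phi (\<lambda>j. int (k j))) p = hermite_series phi"
    by (intro ext) (simp add: herm_expansion_eq_hermite_series recursion_system_eq_lift_coeffs[OF R])
  have sym: "transpose (matrix_inv Sig) = matrix_inv Sig"
    using assms(2,3) by (intro matrix_inv_symmetric) auto
  have smooth: "(\<lambda>t. partial_deriv i (hermite_series phi) (x + t *\<^sub>R axis i 1)) differentiable (at 0)"
    for x i
    unfolding partial_deriv_hermite_series[OF fin] real_differentiable_def
    using hermite_series_line_deriv fin by blast
  show ?thesis
    unfolding series
    using divergence_gaussian_weighted_gradient[OF sym smooth] recursion_system_drift_diffusion[OF R]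
    by simp
qed

end
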